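(* Every $\mathrm{CAT}(0)$ group $G$ satisfies the quadratic radial isoperimetric inequality: there exist a finite presentation $G=\langle S\mid R\rangle$ and a constant $C>0$ such that for every word $w=s_1\cdots s_n\in F_S$ representing the identity $e$ of $G$, $$\mathrm{Area}(w)\leq C\sum_{i=1}^n\big(d_S(\bar w(i),e)+1\big),$$ where $\bar w(i)$ is the image in $G$ of $s_1\cdots s_i$.
   Context: A $\mathrm{CAT}(0)$ group is a group acting properly discontinuously and cocompactly by isometries on a proper geodesic $\mathrm{CAT}(0)$ metric space $(X,d)$, i.e. a geodesic metric space in which for every geodesic triangle $ABC$ with Euclidean comparison triangle $\bar A\bar B\bar C$ (same side lengths), every point $D$ on $BC$ with corresponding $\bar D$ on $\bar B\bar C$ ($d(B,D)=|\bar B\bar D|$) satisfies $d(A,D)\leq|\bar A\bar D|$. For a finite presentation $\langle S\mid R\rangle$ ($S$ finite, $S=S^{-1}$, $R\subset F_S$ finite), $d_S(a,b)=\min\{n:b^{-1}a=s_1\cdots s_n,\ s_i\in S\}$ is the word metric, and for $w\in F_S$ representing $e$, $\mathrm{Area}(w)$ is the smallest $k$ with $w=\prod_{i=1}^k v_ir_iv_i^{-1}$ in $F_S$, $v_i$ reduced words on $S$, $r_i^{\pm1}\in R$. *)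

theory Defs
  imports "HOL-Analysis.Analysis" "HOL-Algebra.Group"
begin

definition geodesic_segment :: "(real \<Rightarrow> 'x::metric_space) \<Rightarrow> 'x \<Rightarrow> 'x \<Rightarrow> bool" where
  "geodesic_segment \<gamma> x y \<longleftrightarrow> \<gamma> 0 = x \<and> \<gamma> (dist x y) = y \<and>
     (\<forall>s\<in>{0..dist x y}. \<forall>t\<in>{0..dist x y}. dist (\<gamma> s) (\<gamma> t) = \<bar>s - t\<bar>)"

definition geodesic_space :: "'x::metric_space itself \<Rightarrow> bool" where
  "geodesic_space _ \<longleftrightarrow> (\<forall>x y::'x. \<exists>\<gamma>. geodesic_segment \<gamma> x y)"

definition proper_space :: "'x::metric_space itself \<Rightarrow> bool" where
  "proper_space _ \<longleftrightarrow> (\<forall>(x::'x) r. compact (cball x r))"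

text \<open>CAT(0) inequality: for every geodesic triangle ABC (side BC given by the geodesic gamma),
  every point D = gamma t on BC, and every Euclidean comparison triangle in the plane
  (complex numbers), d(A,D) \<le> |Abar Dbar|.\<close>
definition CAT0_ineq :: "'x::metric_space itself \<Rightarrow> bool" where
  "CAT0_ineq _ \<longleftrightarrow>
    (\<forall>(A::'x) B C \<gamma> t Ab Bb Cb Db.
       geodesic_segment \<gamma> B C \<and> t \<in> {0..dist B C} \<and>
       dist Ab Bb = dist A B \<and> dist Bb Cb = dist B C \<and> dist Ab Cb = dist A C \<and>
       Db \<in> closed_segment Bb Cb \<and> dist Bb (Db::complex) = t
       \<longrightarrow> dist A (\<gamma> t) \<le> dist Ab Db)"

definition CAT0_space :: "'x::metric_space itself \<Rightarrow> bool" where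
  "CAT0_space X \<longleftrightarrow> geodesic_space X \<and> proper_space X \<and> CAT0_ineq X"

definition cat0_group_action :: "('g, 'b) monoid_scheme \<Rightarrow> ('g \<Rightarrow> 'x::metric_space \<Rightarrow> 'x) \<Rightarrow> bool" where
  "cat0_group_action G \<phi> \<longleftrightarrow>
     CAT0_space TYPE('x) \<and>
     \<comment> \<open>group action\<close>
     (\<forall>x. \<phi> \<one>\<^bsub>G\<^esub> x = x) \<and>
     (\<forall>g\<in>carrier G. \<forall>h\<in>carrier G. \<forall>x. \<phi> (g \<otimes>\<^bsub>G\<^esub> h) x = \<phi> g (\<phi> h x)) \<and>
     \<comment> \<open>by isometries\<close>
     (\<forall>g\<in>carrier G. \<forall>x y. dist (\<phi> g x) (\<phi> g y) = dist x y) \<and>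
     \<comment> \<open>properly discontinuously\<close>
     (\<forall>K::'x set. compact K \<longrightarrow> finite {g\<in>carrier G. \<phi> g ` K \<inter> K \<noteq> {}}) \<and>
     \<comment> \<open>cocompactly\<close>
     (\<exists>K::'x set. compact K \<and> (\<Union>g\<in>carrier G. \<phi> g ` K) = UNIV)"

text \<open>A letter (a, False) stands for the generator a, (a, True) for its formal inverse;
  so the symmetric generating set is S = A \<union> A^{-1}.\<close>
type_synonym 'a word = "('a \<times> bool) list"

definition word_over :: "'a set \<Rightarrow> 'a word \<Rightarrow> bool" where
  "word_over A w \<longleftrightarrow> fst ` set w \<subseteq> A"

definition inv_word :: "'a word \<Rightarrow> 'a word" where
  "inv_word w = rev (map (\<lambda>(a, b). (a, \<not> b)) w)"

definition free_step :: "'a word \<Rightarrow> 'a word \<Rightarrow> bool" where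
  "free_step xs ys \<longleftrightarrow> (\<exists>u v a b. xs = u @ [(a, b), (a, \<not> b)] @ v \<and> ys = u @ v)"

definition free_eq :: "'a word \<Rightarrow> 'a word \<Rightarrow> bool" where
  "free_eq = (\<lambda>x y. free_step x y \<or> free_step y x)\<^sup>*\<^sup>*"

definition eval_word :: "('g, 'b) monoid_scheme \<Rightarrow> ('a \<Rightarrow> 'g) \<Rightarrow> 'a word \<Rightarrow> 'g" where
  "eval_word G \<iota> w = foldr (\<lambda>(a, b) acc. (if b then inv\<^bsub>G\<^esub> (\<iota> a) else \<iota> a) \<otimes>\<^bsub>G\<^esub> acc) w \<one>\<^bsub>G\<^esub>"

definition conj_prod :: "('a word \<times> 'a word \<times> bool) list \<Rightarrow> 'a word" where
  "conj_prod cs = concat (map (\<lambda>(v, r, e). v @ (if e then inv_word r else r) @ inv_word v) cs)"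

definition is_conj_decomp :: "'a set \<Rightarrow> 'a word set \<Rightarrow> 'a word \<Rightarrow> ('a word \<times> 'a word \<times> bool) list \<Rightarrow> bool" where
  "is_conj_decomp A R w cs \<longleftrightarrow>
     (\<forall>(v, r, e)\<in>set cs. r \<in> R \<and> word_over A v) \<and> free_eq w (conj_prod cs)"

definition Area :: "'a set \<Rightarrow> 'a word set \<Rightarrow> 'a word \<Rightarrow> nat" where
  "Area A R w = (LEAST k. \<exists>cs. length cs = k \<and> is_conj_decomp A R w cs)"

text \<open>G = < S | R > via the generator map iota : A \<rightarrow> G: iota induces a surjection
  F_S \<rightarrow> G whose kernel is the normal closure of R.\<close>
definition finite_presentation ::
  "('g, 'b) monoid_scheme \<Rightarrow> 'a set \<Rightarrow> ('a \<Rightarrow> 'g) \<Rightarrow> 'a word set \<Rightarrow> bool" where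
  "finite_presentation G A \<iota> R \<longleftrightarrow>
     finite A \<and> finite R \<and> \<iota> ` A \<subseteq> carrier G \<and> (\<forall>r\<in>R. word_over A r) \<and>
     (\<forall>g\<in>carrier G. \<exists>w. word_over A w \<and> eval_word G \<iota> w = g) \<and>
     (\<forall>w. word_over A w \<longrightarrow> (eval_word G \<iota> w = \<one>\<^bsub>G\<^esub> \<longleftrightarrow> (\<exists>cs. is_conj_decomp A R w cs)))"

definition word_length :: "('g, 'b) monoid_scheme \<Rightarrow> 'a set \<Rightarrow> ('a \<Rightarrow> 'g) \<Rightarrow> 'g \<Rightarrow> nat" where
  "word_length G A \<iota> g = (LEAST n. \<exists>w. word_over A w \<and> length w = n \<and> eval_word G \<iota> w = g)"

end

theory Submission
  imports Defs
begin

(* Fix a base point x0 whose orbit is r-dense and let the finite set of group elements moving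
   x0 by at most 2r + 1 generate. The combing word of h follows the geodesic from x0 to h x0:
   at each unit of arc length it passes through an orbit point within r of the geodesic, so
   consecutive vertices differ by a generator and the word has length about d(x0, h x0).
   Convexity of the CAT(0) metric makes the combings of h and of h s (s a generator) fellow
   travel, so comb(h) s comb(h s)^-1 is filled by a ladder of max(|h|, |h s|) + 1 relators of
   bounded length. Filling a loop w by the triangles spanned by the combings of its prefixes
   w(i), w(i+1) gives the radial bound; the same fillings show that these relators present G. *)

section \<open>Free reduction and products of conjugates\<close>

lemma free_eq_refl [simp]: "free_eq x x"
  by (simp add: free_eq_def)

lemma free_eq_sym: "free_eq x y \<Longrightarrow> free_eq y x"
proof -
  have "symp (\<lambda>x y. free_step x y \<or> free_step y x)" by (auto simp: symp_def)
  then have "symp free_eq" unfolding free_eq_def by (rule symp_rtranclp)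
  then show "free_eq x y \<Longrightarrow> free_eq y x" by (rule sympD)
qed

lemma free_eq_trans [trans]: "free_eq x y \<Longrightarrow> free_eq y z \<Longrightarrow> free_eq x z"
  unfolding free_eq_def by (rule rtranclp_trans)

lemma free_step_append_context: "free_step x y \<Longrightarrow> free_step (u @ x @ v) (u @ y @ v)"
  unfolding free_step_def
proof (elim exE conjE)
  fix u' v' a b assume "x = u' @ [(a, b), (a, \<not> b)] @ v'" "y = u' @ v'"
  then show "\<exists>u'' v'' a b. u @ x @ v = u'' @ [(a, b), (a, \<not> b)] @ v'' \<and> u @ y @ v = u'' @ v''"
    by (intro exI[of _ "u @ u'"] exI[of _ "v' @ v"] exI[of _ a] exI[of _ b]) simp
qed

lemma free_eq_append_context: "free_eq x y \<Longrightarrow> free_eq (u @ x @ v) (u @ y @ v)"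
  unfolding free_eq_def
proof (induction rule: rtranclp_induct)
  case (step y z)
  then show ?case
    by (auto intro: rtranclp.rtrancl_into_rtrancl dest: free_step_append_context[of _ _ u v])
qed simp

lemma free_eq_append:
  assumes "free_eq x x'" and "free_eq y y'"
  shows "free_eq (x @ y) (x' @ y')"
proof -
  have "free_eq (x @ y) (x' @ y)" using free_eq_append_context[OF assms(1), of "[]" y] by simp
  also have "free_eq \<dots> (x' @ y')" using free_eq_append_context[OF assms(2), of x' "[]"] by simp
  finally show ?thesis .
qed

lemma inv_word_Nil [simp]: "inv_word [] = []"
  by (simp add: inv_word_def)

lemma inv_word_Cons [simp]: "inv_word (c # x) = inv_word x @ [(fst c, \<not> snd c)]"
  by (cases c) (simp add: inv_word_def)

lemma inv_word_append [simp]: "inv_word (x @ y) = inv_word y @ inv_word x"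
  by (simp add: inv_word_def)

lemma inv_word_inv_word [simp]: "inv_word (inv_word x) = x"
  by (induction x) auto

lemma length_inv_word [simp]: "length (inv_word x) = length x"
  by (simp add: inv_word_def)

lemma word_over_Nil [simp]: "word_over A []"
  by (simp add: word_over_def)

lemma word_over_Cons [simp]: "word_over A (c # y) \<longleftrightarrow> fst c \<in> A \<and> word_over A y"
  by (auto simp: word_over_def)

lemma word_over_append [simp]: "word_over A (x @ y) \<longleftrightarrow> word_over A x \<and> word_over A y"
  by (auto simp: word_over_def)

lemma word_over_concat [simp]: "word_over A (concat xs) \<longleftrightarrow> (\<forall>x\<in>set xs. word_over A x)"
  by (auto simp: word_over_def)

lemma word_over_inv_word [simp]: "word_over A (inv_word x) \<longleftrightarrow> word_over A x"
  by (induction x) auto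

lemma free_eq_inverse_pair: "free_eq [(a, b), (a, \<not> b)] []"
proof -
  have "free_step [(a, b), (a, \<not> b)] []"
    unfolding free_step_def by (intro exI[of _ "[]"]) simp
  then show ?thesis unfolding free_eq_def by (simp add: r_into_rtranclp)
qed

lemma free_eq_append_inv_word: "free_eq (x @ inv_word x) []"
proof (induction x)
  case (Cons c x)
  obtain a b where c: "c = (a, b)" by (cases c)
  have "free_eq ([c] @ (x @ inv_word x) @ [(a, \<not> b)]) ([c] @ [] @ [(a, \<not> b)])"
    by (rule free_eq_append_context[OF Cons.IH])
  then have "free_eq ((c # x) @ inv_word (c # x)) [(a, b), (a, \<not> b)]"
    using c by simp
  then show ?case by (rule free_eq_trans[OF _ free_eq_inverse_pair])
qed simp

lemma free_eq_cancel_inner: "free_eq (u @ inv_word x @ x @ v) (u @ v)"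
  using free_eq_append_context[OF free_eq_append_inv_word[of "inv_word x"], of u v] by simp

lemma conj_prod_Nil [simp]: "conj_prod [] = []"
  by (simp add: conj_prod_def)

lemma conj_prod_Cons [simp]:
  "conj_prod ((v, r, e) # cs) = v @ (if e then inv_word r else r) @ inv_word v @ conj_prod cs"
  by (simp add: conj_prod_def)

lemma conj_prod_append [simp]: "conj_prod (cs @ ds) = conj_prod cs @ conj_prod ds"
  by (simp add: conj_prod_def)

lemma conj_decomp_Nil: "is_conj_decomp A R [] []"
  by (simp add: is_conj_decomp_def)

lemma conj_decomp_free_eq:
  assumes "free_eq w w'" and "is_conj_decomp A R w' cs"
  shows "is_conj_decomp A R w cs"
  using assms(2) free_eq_trans[OF assms(1)] unfolding is_conj_decomp_def by simp

lemma conj_decomp_append: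
  "is_conj_decomp A R x cs \<Longrightarrow> is_conj_decomp A R y ds \<Longrightarrow> is_conj_decomp A R (x @ y) (cs @ ds)"
  unfolding is_conj_decomp_def by (auto intro: free_eq_append)

lemma conj_decomp_conjugate:
  "r \<in> R \<Longrightarrow> word_over A v \<Longrightarrow> is_conj_decomp A R (v @ r @ inv_word v) [(v, r, False)]"
  by (simp add: is_conj_decomp_def)

lemma Area_le: "is_conj_decomp A R w cs \<Longrightarrow> Area A R w \<le> length cs"
  unfolding Area_def by (rule Least_le) blast

text \<open>A van Kampen diagram for \<open>w\<close> built from triangles with sides \<open>q i\<close>, the letter \<open>w ! i\<close>
  and \<open>q (Suc i)\<close>, all fanning out from the base point.\<close>
lemma conj_decomp_telescope:
  assumes q0: "q 0 = []" and q_end: "q (length w) = []"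
    and piece: "\<And>i. i < length w \<Longrightarrow>
      \<exists>cs. is_conj_decomp A R (q i @ [w ! i] @ inv_word (q (Suc i))) cs \<and> length cs = m i"
  shows "\<exists>cs. is_conj_decomp A R w cs \<and> length cs = (\<Sum>i<length w. m i)"
proof -
  have "\<exists>cs. is_conj_decomp A R (take k w @ inv_word (q k)) cs \<and> length cs = (\<Sum>i<k. m i)"
    if "k \<le> length w" for k
    using that
  proof (induction k)
    case 0
    show ?case using q0 conj_decomp_Nil by fastforce
  next
    case (Suc k)
    then have k: "k < length w" by simp
    obtain cs where cs: "is_conj_decomp A R (take k w @ inv_word (q k)) cs" "length cs = (\<Sum>i<k. m i)"
      using Suc.IH k by auto
    obtain ds where ds: "is_conj_decomp A R (q k @ [w ! k] @ inv_word (q (Suc k))) ds" "length ds = m k"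
      using piece[OF k] by blast
    have "free_eq (take (Suc k) w @ inv_word (q (Suc k)))
        ((take k w @ inv_word (q k)) @ (q k @ [w ! k] @ inv_word (q (Suc k))))"
      using free_eq_sym[OF free_eq_cancel_inner[of "take k w" "q k" "[w ! k] @ inv_word (q (Suc k))"]] k
      by (simp add: take_Suc_conv_app_nth)
    then have "is_conj_decomp A R (take (Suc k) w @ inv_word (q (Suc k))) (cs @ ds)"
      by (rule conj_decomp_free_eq[OF _ conj_decomp_append[OF cs(1) ds(1)]])
    then show ?case using cs(2) ds(2) by (intro exI[of _ "cs @ ds"]) simp
  qed
  from this[of "length w"] show ?thesis using q_end by simp
qed

text \<open>A ladder with rails \<open>s\<close>, \<open>s'\<close> and rungs \<open>g\<close> whose square cells are relators.\<close>
lemma conj_decomp_ladder: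
  assumes g0: "g 0 = []"
    and cell: "\<And>j. j < k \<Longrightarrow> s j @ g (Suc j) @ inv_word (s' j) @ inv_word (g j) \<in> R"
    and side: "\<And>j. j < k \<Longrightarrow> word_over A (s j)"
  shows "\<exists>cs. is_conj_decomp A R (concat (map s [0..<k]) @ g k @ inv_word (concat (map s' [0..<k]))) cs
    \<and> length cs = k"
proof -
  have "\<exists>cs. is_conj_decomp A R (concat (map s [0..<n]) @ g n @ inv_word (concat (map s' [0..<n]))) cs
    \<and> length cs = n" if "n \<le> k" for n
    using that
  proof (induction n)
    case 0
    show ?case using g0 conj_decomp_Nil by fastforce
  next
    case (Suc n)
    then have n: "n < k" by simp
    define P where "P = concat (map s [0..<n])"
    define P' where "P' = concat (map s' [0..<n])"
    define C where "C = s n @ g (Suc n) @ inv_word (s' n) @ inv_word (g n)"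
    obtain cs where cs: "is_conj_decomp A R (P @ g n @ inv_word P') cs" "length cs = n"
      using Suc.IH n unfolding P_def P'_def by auto
    have "C \<in> R" using cell[OF n] by (simp add: C_def)
    moreover have "word_over A P" using side n by (simp add: P_def)
    ultimately have decomp:
      "is_conj_decomp A R ((P @ C @ inv_word P) @ (P @ g n @ inv_word P')) ((P, C, False) # cs)"
      using conj_decomp_append[OF conj_decomp_conjugate cs(1)] by simp
    have "free_eq ((P @ s n @ g (Suc n) @ inv_word (s' n)) @ inv_word P')
        ((P @ s n @ g (Suc n) @ inv_word (s' n) @ inv_word (g n)) @ g n @ inv_word P')"
      using free_eq_sym[OF free_eq_cancel_inner[of "P @ s n @ g (Suc n) @ inv_word (s' n)" "g n" "inv_word P'"]]
      by simp
    also have "free_eq \<dots> ((P @ C @ inv_word P) @ (P @ g n @ inv_word P'))"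
      using free_eq_sym[OF free_eq_cancel_inner[of "P @ C" P "g n @ inv_word P'"]] by (simp add: C_def)
    finally have "is_conj_decomp A R ((P @ s n @ g (Suc n) @ inv_word (s' n)) @ inv_word P') ((P, C, False) # cs)"
      using decomp by (rule conj_decomp_free_eq)
    then show ?case
      using cs(2) by (intro exI[of _ "(P, C, False) # cs"]) (simp add: P_def P'_def)
  qed
  then show ?thesis by simp
qed

definition letter_value :: "('g, 'b) monoid_scheme \<Rightarrow> ('a \<Rightarrow> 'g) \<Rightarrow> 'a \<times> bool \<Rightarrow> 'g" where
  "letter_value G \<iota> c = (if snd c then inv\<^bsub>G\<^esub> (\<iota> (fst c)) else \<iota> (fst c))"

lemma eval_word_Nil [simp]: "eval_word G \<iota> [] = \<one>\<^bsub>G\<^esub>"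
  by (simp add: eval_word_def)

lemma eval_word_Cons [simp]: "eval_word G \<iota> (c # w) = letter_value G \<iota> c \<otimes>\<^bsub>G\<^esub> eval_word G \<iota> w"
  by (cases c) (simp add: eval_word_def letter_value_def)

lemma word_length_attained:
  assumes "word_over A u"
  obtains u' where "word_over A u'" "length u' = word_length G A \<iota> (eval_word G \<iota> u)"
    "eval_word G \<iota> u' = eval_word G \<iota> u"
proof -
  let ?P = "\<lambda>m. \<exists>u'. word_over A u' \<and> length u' = m \<and> eval_word G \<iota> u' = eval_word G \<iota> u"
  have "?P (length u)" using assms by blast
  then have "?P (LEAST m. ?P m)" by (rule LeastI)
  then show ?thesis using that unfolding word_length_def by blast
qed

context group
begin

lemma mult_inv_cancel_left: "x \<in> carrier G \<Longrightarrow> y \<in> carrier G \<Longrightarrow> x \<otimes> (inv x \<otimes> y) = y"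
  by (simp add: m_assoc[symmetric])

lemma inv_mult_cancel_left: "x \<in> carrier G \<Longrightarrow> y \<in> carrier G \<Longrightarrow> inv x \<otimes> (x \<otimes> y) = y"
  by (simp add: m_assoc[symmetric])

context
  fixes \<iota> :: "'c \<Rightarrow> 'a"
  assumes gens_closed: "range \<iota> \<subseteq> carrier G"
begin

lemma gen_closed [simp]: "\<iota> a \<in> carrier G"
  using gens_closed by auto

lemma letter_value_closed [simp]: "letter_value G \<iota> c \<in> carrier G"
  by (simp add: letter_value_def)

lemma eval_word_closed [simp]: "eval_word G \<iota> w \<in> carrier G"
  by (induction w) auto

lemma eval_word_append: "eval_word G \<iota> (x @ y) = eval_word G \<iota> x \<otimes> eval_word G \<iota> y"
  by (induction x) (auto simp: m_assoc)

lemma eval_word_take_Suc: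
  "i < length w \<Longrightarrow> eval_word G \<iota> (take (Suc i) w) = eval_word G \<iota> (take i w) \<otimes> letter_value G \<iota> (w ! i)"
  by (simp add: take_Suc_conv_app_nth eval_word_append)

lemma eval_word_inv_word: "eval_word G \<iota> (inv_word x) = inv (eval_word G \<iota> x)"
proof (induction x)
  case (Cons c x)
  have "letter_value G \<iota> (fst c, \<not> snd c) = inv (letter_value G \<iota> c)"
    by (simp add: letter_value_def)
  then show ?case using Cons by (simp add: eval_word_append inv_mult_group)
qed simp

lemma eval_word_free_step: "free_step x y \<Longrightarrow> eval_word G \<iota> x = eval_word G \<iota> y"
  unfolding free_step_def
proof (elim exE conjE)
  fix u v a b assume x: "x = u @ [(a, b), (a, \<not> b)] @ v" and y: "y = u @ v"
  have "letter_value G \<iota> (a, b) \<otimes> letter_value G \<iota> (a, \<not> b) = \<one>"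
    by (simp add: letter_value_def)
  then have "eval_word G \<iota> ([(a, b), (a, \<not> b)] @ v) = eval_word G \<iota> v"
    by (simp add: m_assoc[symmetric])
  then show "eval_word G \<iota> x = eval_word G \<iota> y"
    unfolding x y by (simp only: eval_word_append)
qed

lemma eval_word_free_eq: "free_eq x y \<Longrightarrow> eval_word G \<iota> x = eval_word G \<iota> y"
  unfolding free_eq_def
proof (induction rule: rtranclp_induct)
  case (step y z)
  then show ?case using eval_word_free_step[of y z] eval_word_free_step[of z y] by auto
qed simp

lemma eval_word_conj_prod:
  "\<forall>r\<in>R. eval_word G \<iota> r = \<one> \<Longrightarrow> \<forall>(v, r, e)\<in>set cs. r \<in> R \<Longrightarrow> eval_word G \<iota> (conj_prod cs) = \<one>"
proof (induction cs)
  case (Cons c cs)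
  obtain v r e where c: "c = (v, r, e)" by (cases c)
  then have "eval_word G \<iota> (if e then inv_word r else r) = \<one>"
    using Cons.prems by (simp add: eval_word_inv_word)
  then show ?case using Cons c by (simp add: eval_word_append eval_word_inv_word)
qed simp

lemma eval_word_conj_decomp:
  assumes "\<forall>r\<in>R. eval_word G \<iota> r = \<one>" and "is_conj_decomp A R w cs"
  shows "eval_word G \<iota> w = \<one>"
proof -
  have "\<forall>(v, r, e)\<in>set cs. r \<in> R" and "free_eq w (conj_prod cs)"
    using assms(2) unfolding is_conj_decomp_def by auto
  then show ?thesis using eval_word_conj_prod[OF assms(1)] eval_word_free_eq by simp
qed

end

end

section \<open>Geodesics in CAT(0) spaces\<close>

lemma geodesic_segment_dist:
  assumes "geodesic_segment \<gamma> B C" "s \<in> {0..dist B C}" "t \<in> {0..dist B C}"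
  shows "dist (\<gamma> s) (\<gamma> t) = \<bar>s - t\<bar>"
  using assms unfolding geodesic_segment_def by blast

lemma geodesic_segment_start: "geodesic_segment \<gamma> B C \<Longrightarrow> \<gamma> 0 = B"
  unfolding geodesic_segment_def by blast

lemma geodesic_segment_end: "geodesic_segment \<gamma> B C \<Longrightarrow> \<gamma> (dist B C) = C"
  unfolding geodesic_segment_def by blast

lemma geodesic_segment_dist_start:
  assumes "geodesic_segment \<gamma> B C" "s \<in> {0..dist B C}"
  shows "dist B (\<gamma> s) = s"
  using geodesic_segment_dist[OF assms(1) _ assms(2), of 0] geodesic_segment_start[OF assms(1)] assms(2)
  by simp

text \<open>The comparison triangle has vertices \<open>Ab\<close>, \<open>0\<close>, \<open>l\<close>; the last
  conjunct is Stewart's theorem for the point at parameter \<open>t\<close> on the side \<open>[0, l]\<close>.\<close>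
lemma comparison_triangle_exists:
  fixes a e l t :: real
  assumes "0 < l" "0 \<le> a" "0 \<le> e" "e \<le> a + l" "a \<le> e + l" "l \<le> a + e"
  shows "\<exists>Ab::complex. dist Ab 0 = a \<and> dist Ab (complex_of_real l) = e \<and>
     (dist Ab (complex_of_real (t * l)))\<^sup>2 = (1 - t) * a\<^sup>2 + t * e\<^sup>2 - t * (1 - t) * l\<^sup>2"
proof -
  define x where "x = (l\<^sup>2 + a\<^sup>2 - e\<^sup>2) / (2 * l)"
  have x2: "2 * l * x = l\<^sup>2 + a\<^sup>2 - e\<^sup>2" using assms(1) unfolding x_def by simp
  have "\<bar>l - a\<bar> \<le> e" using assms by arith
  then have "(l - a)\<^sup>2 \<le> e\<^sup>2" by (metis abs_ge_zero power2_abs power_mono)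
  then have upper: "l\<^sup>2 + a\<^sup>2 - e\<^sup>2 \<le> 2 * l * a" by (simp add: power2_eq_square algebra_simps)
  have "e\<^sup>2 \<le> (l + a)\<^sup>2" using assms by (intro power_mono) auto
  then have lower: "- (l\<^sup>2 + a\<^sup>2 - e\<^sup>2) \<le> 2 * l * a" by (simp add: power2_eq_square algebra_simps)
  have "\<bar>2 * l * x\<bar> \<le> 2 * l * a" using upper lower x2 by simp
  then have "2 * l * \<bar>x\<bar> \<le> 2 * l * a" using assms(1) by (simp add: abs_mult)
  then have "\<bar>x\<bar> \<le> a" using assms(1) by simp
  then have xa: "x\<^sup>2 \<le> a\<^sup>2" by (metis abs_ge_zero power2_abs power_mono)
  define y where "y = sqrt (a\<^sup>2 - x\<^sup>2)"
  have y2: "y\<^sup>2 = a\<^sup>2 - x\<^sup>2" unfolding y_def using xa by simp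
  have cmod_sq: "(cmod (Complex u v))\<^sup>2 = u\<^sup>2 + v\<^sup>2" for u v
    by (simp add: complex_norm)
  have dist_sq: "(dist (Complex x y) (complex_of_real s))\<^sup>2 = (x - s)\<^sup>2 + y\<^sup>2" for s
  proof -
    have "Complex x y - complex_of_real s = Complex (x - s) y" by (simp add: complex_eq_iff)
    then show ?thesis by (simp only: dist_norm cmod_sq)
  qed
  have "(dist (Complex x y) 0)\<^sup>2 = a\<^sup>2"
    using dist_sq[of 0] y2 by simp
  then have "dist (Complex x y) 0 = a" using assms(2) by (simp add: power2_eq_iff_nonneg)
  moreover have "(dist (Complex x y) (complex_of_real l))\<^sup>2 = e\<^sup>2"
    using dist_sq[of l] y2 x2 by (simp add: power2_eq_square algebra_simps)
  then have "dist (Complex x y) (complex_of_real l) = e" using assms(3) by (simp add: power2_eq_iff_nonneg)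
  moreover have "(x - t * l)\<^sup>2 + y\<^sup>2 = (1 - t) * a\<^sup>2 + t * e\<^sup>2 - t * (1 - t) * l\<^sup>2"
  proof -
    have "(x - t * l)\<^sup>2 + y\<^sup>2 = a\<^sup>2 - t * (2 * l * x) + t\<^sup>2 * l\<^sup>2"
      using y2 by (simp add: power2_eq_square algebra_simps)
    then show ?thesis unfolding x2 by (simp add: power2_eq_square algebra_simps)
  qed
  ultimately show ?thesis using dist_sq[of "t * l"] by metis
qed

lemma CAT0_CN_inequality:
  fixes A B C :: "'x::metric_space"
  assumes cat: "CAT0_ineq TYPE('x)" and g: "geodesic_segment \<gamma> B C" and t: "0 \<le> t" "t \<le> 1"
  shows "(dist A (\<gamma> (t * dist B C)))\<^sup>2
    \<le> (1 - t) * (dist A B)\<^sup>2 + t * (dist A C)\<^sup>2 - t * (1 - t) * (dist B C)\<^sup>2"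
proof (cases "B = C")
  case True
  then show ?thesis using geodesic_segment_start[OF g] by (simp add: algebra_simps)
next
  case False
  define l where "l = dist B C"
  have l: "0 < l" using False l_def by simp
  obtain Ab :: complex where Ab: "dist Ab 0 = dist A B" "dist Ab (complex_of_real l) = dist A C"
    "(dist Ab (complex_of_real (t * l)))\<^sup>2 = (1 - t) * (dist A B)\<^sup>2 + t * (dist A C)\<^sup>2 - t * (1 - t) * l\<^sup>2"
    using comparison_triangle_exists[OF l, of "dist A B" "dist A C" t] l_def
      dist_triangle[of A C B] dist_triangle[of A B C] dist_triangle[of B C A]
    by (auto simp: dist_commute)
  have "complex_of_real (t * l) \<in> closed_segment 0 (complex_of_real l)"
    unfolding closed_segment_def using t by (intro CollectI exI[of _ t]) (simp add: scaleR_conv_of_real)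
  moreover have "t * l \<in> {0..dist B C}" using t l l_def by (simp add: mult_left_le_one_le)
  moreover have "dist 0 (complex_of_real l) = dist B C" "dist 0 (complex_of_real (t * l)) = t * l"
    using t l l_def by (simp_all add: dist_norm norm_mult)
  ultimately have "dist A (\<gamma> (t * l)) \<le> dist Ab (complex_of_real (t * l))"
    using cat g Ab unfolding CAT0_ineq_def by blast
  then have "(dist A (\<gamma> (t * l)))\<^sup>2 \<le> (dist Ab (complex_of_real (t * l)))\<^sup>2"
    by (intro power_mono) auto
  then show ?thesis using Ab(3) unfolding l_def by linarith
qed

text \<open>Apply the CN inequality in the triangle \<open>P Y Y'\<close>, then in the triangle \<open>p P Y'\<close>.\<close>
lemma CAT0_geodesics_common_start:
  fixes P Y Y' :: "'x::metric_space"
  assumes cat: "CAT0_ineq TYPE('x)"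
    and g: "geodesic_segment \<gamma> P Y" and g': "geodesic_segment \<gamma>' P Y'"
    and t: "0 \<le> t" "t \<le> 1"
  shows "dist (\<gamma> (t * dist P Y)) (\<gamma>' (t * dist P Y')) \<le> t * dist Y Y'"
proof -
  define l where "l = dist P Y"
  define l' where "l' = dist P Y'"
  define c where "c = dist Y Y'"
  define p where "p = \<gamma> (t * l)"
  have A: "(dist Y' p)\<^sup>2 \<le> (1 - t) * l'\<^sup>2 + t * c\<^sup>2 - t * (1 - t) * l\<^sup>2"
    using CAT0_CN_inequality[OF cat g t, of Y'] unfolding p_def l_def l'_def c_def
    by (simp add: dist_commute)
  have "t * l \<in> {0..dist P Y}" using t unfolding l_def by (simp add: mult_left_le_one_le)
  then have pP: "dist p P = t * l"
    using geodesic_segment_dist_start[OF g] unfolding p_def by (simp add: dist_commute)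
  have B: "(dist p (\<gamma>' (t * l')))\<^sup>2 \<le> (1 - t) * (dist p P)\<^sup>2 + t * (dist p Y')\<^sup>2 - t * (1 - t) * l'\<^sup>2"
    using CAT0_CN_inequality[OF cat g' t, of p] unfolding l'_def .
  have "t * (dist p Y')\<^sup>2 \<le> t * ((1 - t) * l'\<^sup>2 + t * c\<^sup>2 - t * (1 - t) * l\<^sup>2)"
    using A t by (simp add: dist_commute mult_left_mono)
  then have "(dist p (\<gamma>' (t * l')))\<^sup>2
      \<le> (1 - t) * (t * l)\<^sup>2 + t * ((1 - t) * l'\<^sup>2 + t * c\<^sup>2 - t * (1 - t) * l\<^sup>2) - t * (1 - t) * l'\<^sup>2"
    using B unfolding pP by linarith
  also have "\<dots> = (t * c)\<^sup>2"
    by (simp add: power2_eq_square algebra_simps)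
  finally have "(dist p (\<gamma>' (t * l')))\<^sup>2 \<le> (t * c)\<^sup>2" .
  moreover have "0 \<le> t * c" using t unfolding c_def by simp
  ultimately show ?thesis unfolding p_def l_def l'_def c_def by (rule power2_le_imp_le)
qed

lemma min_rescale_error:
  fixes j l l' :: real
  assumes "0 \<le> j" "0 < l" "l \<le> l'"
  shows "\<bar>min j l / l * l' - min j l'\<bar> \<le> l' - l"
proof (cases "j \<le> l")
  case True
  have "j * (l' - l) \<le> l * (l' - l)" using True assms by (intro mult_right_mono) auto
  then have "j * (l' - l) / l \<le> l' - l" using assms by (simp add: divide_le_eq mult.commute)
  moreover have "j / l * l' - j = j * (l' - l) / l" using assms by (simp add: field_simps)
  moreover have "0 \<le> j * (l' - l) / l" using assms by simp
  ultimately show ?thesis using True assms by simp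
next
  case False
  then show ?thesis using assms by (cases "j \<le> l'") auto
qed

text \<open>Arc length parametrisation instead of proportional speed costs a factor \<open>2\<close>:
  the two parametrisations differ by at most \<open>\<bar>dist P Y' - dist P Y\<bar> \<le> dist Y Y'\<close>.\<close>
lemma CAT0_geodesics_truncated:
  fixes P Y Y' :: "'x::metric_space"
  assumes cat: "CAT0_ineq TYPE('x)"
    and g: "geodesic_segment \<gamma> P Y" and g': "geodesic_segment \<gamma>' P Y'" and j: "0 \<le> j"
  shows "dist (\<gamma> (min j (dist P Y))) (\<gamma>' (min j (dist P Y'))) \<le> 2 * dist Y Y'"
proof -
  have ordered: "dist (\<beta> (min j (dist P Z))) (\<beta>' (min j (dist P Z'))) \<le> 2 * dist Z Z'"
    if b: "geodesic_segment \<beta> P Z" and b': "geodesic_segment \<beta>' P Z'" and le: "dist P Z \<le> dist P Z'"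
    for \<beta> \<beta>' Z Z'
  proof -
    define l where "l = dist P Z"
    define l' where "l' = dist P Z'"
    define c where "c = dist Z Z'"
    have lc: "l' \<le> l + c" unfolding l_def l'_def c_def by (rule dist_triangle)
    have u': "min j l' \<in> {0..dist P Z'}" using j unfolding l'_def by auto
    show ?thesis
    proof (cases "l = 0")
      case True
      have "\<beta> (min j l) = P" using True geodesic_segment_start[OF b] j by simp
      moreover have "dist P (\<beta>' (min j l')) \<le> l'"
        using geodesic_segment_dist_start[OF b' u'] unfolding l'_def by simp
      ultimately have "dist (\<beta> (min j l)) (\<beta>' (min j l')) \<le> c" using lc True by simp
      moreover have "0 \<le> c" by (simp add: c_def)
      ultimately show ?thesis unfolding l_def l'_def c_def by linarith
    next
      case False
      then have l: "0 < l" unfolding l_def by simp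
      define t where "t = min j l / l"
      have t: "0 \<le> t" "t \<le> 1" using l j unfolding t_def by auto
      have "dist (\<beta> (min j l)) (\<beta>' (t * l')) \<le> t * c"
        using CAT0_geodesics_common_start[OF cat b b' t] l unfolding l_def l'_def c_def t_def by simp
      moreover have "t * c \<le> c" using t unfolding c_def by (simp add: mult_left_le_one_le)
      moreover have "t * l' \<in> {0..dist P Z'}" using t unfolding l'_def by (simp add: mult_left_le_one_le)
      then have "dist (\<beta>' (t * l')) (\<beta>' (min j l')) \<le> l' - l"
        using geodesic_segment_dist[OF b' _ u'] min_rescale_error[OF j l] le
        unfolding t_def l_def l'_def by simp
      ultimately show ?thesis
        using lc dist_triangle[of "\<beta> (min j l)" "\<beta>' (min j l')" "\<beta>' (t * l')"]
        unfolding l_def l'_def c_def by linarith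
    qed
  qed
  show ?thesis
  proof (cases "dist P Y \<le> dist P Y'")
    case True
    then show ?thesis by (rule ordered[OF g g'])
  next
    case False
    then show ?thesis using ordered[OF g' g] by (simp add: dist_commute)
  qed
qed

section \<open>Geometric actions and combings\<close>

locale cat0_action = group G for G :: "('g, 'b) monoid_scheme" (structure) +
  fixes \<phi> :: "'g \<Rightarrow> 'x::metric_space \<Rightarrow> 'x"
  assumes cat0_action: "cat0_group_action G \<phi>"
begin

lemma CAT0_space: "CAT0_space TYPE('x)"
  using cat0_action by (simp add: cat0_group_action_def)

lemma act_one [simp]: "\<phi> \<one> x = x"
  using cat0_action by (simp add: cat0_group_action_def)

lemma act_mult: "g \<in> carrier G \<Longrightarrow> h \<in> carrier G \<Longrightarrow> \<phi> (g \<otimes> h) x = \<phi> g (\<phi> h x)"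
  using cat0_action by (simp add: cat0_group_action_def)

lemma act_isometry [simp]: "g \<in> carrier G \<Longrightarrow> dist (\<phi> g x) (\<phi> g y) = dist x y"
proof -
  have "\<forall>g\<in>carrier G. \<forall>x y. dist (\<phi> g x) (\<phi> g y) = dist x y"
    using cat0_action unfolding cat0_group_action_def by (elim conjE) assumption
  then show "g \<in> carrier G \<Longrightarrow> dist (\<phi> g x) (\<phi> g y) = dist x y" by blast
qed

lemma properly_discontinuous: "compact K \<Longrightarrow> finite {g \<in> carrier G. \<phi> g ` K \<inter> K \<noteq> {}}"
proof -
  have "\<forall>K::'x set. compact K \<longrightarrow> finite {g \<in> carrier G. \<phi> g ` K \<inter> K \<noteq> {}}"
    using cat0_action unfolding cat0_group_action_def by (elim conjE) assumption
  then show "compact K \<Longrightarrow> finite {g \<in> carrier G. \<phi> g ` K \<inter> K \<noteq> {}}" by blast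
qed

lemma cocompact: "\<exists>K::'x set. compact K \<and> (\<Union>g\<in>carrier G. \<phi> g ` K) = UNIV"
  using cat0_action unfolding cat0_group_action_def by (elim conjE) assumption

lemma orbit_cobounded:
  obtains r where "0 \<le> r" "\<forall>y. \<exists>g\<in>carrier G. dist y (\<phi> g x0) \<le> r"
proof -
  obtain K :: "'x set" where K: "compact K" "(\<Union>g\<in>carrier G. \<phi> g ` K) = UNIV"
    using cocompact by blast
  obtain e where e: "\<forall>k\<in>K. dist x0 k \<le> e"
    using compact_imp_bounded[OF K(1)] unfolding bounded_any_center[of K x0] by blast
  have "\<exists>g\<in>carrier G. dist y (\<phi> g x0) \<le> max e 0" for y
  proof -
    have "y \<in> (\<Union>g\<in>carrier G. \<phi> g ` K)" using K(2) by simp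
    then obtain g k where g: "g \<in> carrier G" "k \<in> K" "y = \<phi> g k" by blast
    then have "dist y (\<phi> g x0) = dist x0 k" by (simp add: dist_commute)
    then have "dist y (\<phi> g x0) \<le> max e 0" using e g(2) by (simp add: le_max_iff_disj)
    with g(1) show ?thesis by blast
  qed
  then show ?thesis using that[of "max e 0"] by simp
qed

lemma finite_bounded_displacement: "finite {g \<in> carrier G. dist x0 (\<phi> g x0) \<le> R}"
proof (rule finite_subset)
  have "compact (cball x0 R)"
    using CAT0_space by (simp add: CAT0_space_def proper_space_def)
  then show "finite {g \<in> carrier G. \<phi> g ` cball x0 R \<inter> cball x0 R \<noteq> {}}"
    by (rule properly_discontinuous)
  show "{g \<in> carrier G. dist x0 (\<phi> g x0) \<le> R} \<subseteq> {g \<in> carrier G. \<phi> g ` cball x0 R \<inter> cball x0 R \<noteq> {}}"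
  proof
    fix g assume g: "g \<in> {g \<in> carrier G. dist x0 (\<phi> g x0) \<le> R}"
    then have "dist x0 (\<phi> g x0) \<le> R" by simp
    then have "0 \<le> R" using zero_le_dist[of x0 "\<phi> g x0"] by linarith
    then have "x0 \<in> cball x0 R" by simp
    then have "\<phi> g x0 \<in> \<phi> g ` cball x0 R \<inter> cball x0 R" using g by simp
    then show "g \<in> {g \<in> carrier G. \<phi> g ` cball x0 R \<inter> cball x0 R \<noteq> {}}" using g by blast
  qed
qed

end

text \<open>The generators are enumerated by natural numbers because the presentation has to use an
  alphabet of type \<open>nat set\<close>; letters outside the alphabet are sent to \<open>\<one>\<close>.\<close>
locale cat0_action_net = cat0_action G \<phi>
  for G :: "('g, 'b) monoid_scheme" (structure) and \<phi> :: "'g \<Rightarrow> 'x::metric_space \<Rightarrow> 'x" +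
  fixes x0 :: 'x and r :: real
  assumes net_radius_nonneg: "0 \<le> r"
    and orbit_net: "\<forall>y. \<exists>g\<in>carrier G. dist y (\<phi> g x0) \<le> r"
begin

definition displacement :: "'g \<Rightarrow> real" where
  "displacement g = dist x0 (\<phi> g x0)"

definition step_radius :: real where
  "step_radius = 2 * r + 1"

definition gens :: "'g set" where
  "gens = {g \<in> carrier G. displacement g \<le> step_radius}"

definition alphabet :: "nat set" where
  "alphabet = {..<card gens}"

definition gen_enum :: "nat \<Rightarrow> 'g" where
  "gen_enum = (SOME f. bij_betw f alphabet gens)"

definition gen :: "nat \<Rightarrow> 'g" where
  "gen a = (if a \<in> alphabet then gen_enum a else \<one>)"

definition gen_letter :: "'g \<Rightarrow> nat \<times> bool" where
  "gen_letter g = (the_inv_into alphabet gen_enum g, False)"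

lemma step_radius_ge_1: "1 \<le> step_radius"
  using net_radius_nonneg by (simp add: step_radius_def)

lemma displacement_nonneg: "0 \<le> displacement g"
  by (simp add: displacement_def)

lemma dist_orbit:
  assumes "g \<in> carrier G" "h \<in> carrier G"
  shows "dist (\<phi> g x0) (\<phi> h x0) = displacement (inv g \<otimes> h)"
proof -
  have "\<phi> g (\<phi> (inv g \<otimes> h) x0) = \<phi> h x0"
    using assms by (simp add: act_mult[symmetric] m_assoc[symmetric])
  then show ?thesis
    using act_isometry[of g x0 "\<phi> (inv g \<otimes> h) x0"] assms by (simp add: displacement_def)
qed

lemma displacement_inv: "g \<in> carrier G \<Longrightarrow> displacement (inv g) = displacement g"
  using dist_orbit[of g \<one>] by (simp add: displacement_def dist_commute)

lemma displacement_mult: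
  assumes "g \<in> carrier G" "h \<in> carrier G"
  shows "displacement (g \<otimes> h) \<le> displacement g + displacement h"
  using dist_triangle[of x0 "\<phi> (g \<otimes> h) x0" "\<phi> g x0"] assms
  by (simp add: displacement_def act_mult)

lemma gen_enum_bij: "bij_betw gen_enum alphabet gens"
proof -
  have "finite gens"
    using finite_bounded_displacement by (simp add: gens_def displacement_def)
  then have "\<exists>f. bij_betw f alphabet gens"
    using ex_bij_betw_nat_finite by (auto simp: alphabet_def atLeast0LessThan)
  then show ?thesis unfolding gen_enum_def by (rule someI_ex)
qed

lemma finite_alphabet: "finite alphabet"
  by (simp add: alphabet_def)

lemma gen_in_gens: "a \<in> alphabet \<Longrightarrow> gen a \<in> gens"
  using gen_enum_bij by (auto simp: gen_def bij_betw_def)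

lemma range_gen: "range gen \<subseteq> carrier G"
  using gen_enum_bij by (auto simp: gen_def bij_betw_def gens_def)

lemmas gen_closed = gen_closed[OF range_gen]
  and letter_value_closed = letter_value_closed[OF range_gen]
  and eval_word_closed = eval_word_closed[OF range_gen]
  and eval_word_append = eval_word_append[OF range_gen]
  and eval_word_inv_word = eval_word_inv_word[OF range_gen]
  and eval_word_take_Suc = eval_word_take_Suc[OF range_gen]

declare gen_closed [simp] letter_value_closed [simp] eval_word_closed [simp]

lemma letter_value_in_gens: "fst c \<in> alphabet \<Longrightarrow> letter_value G gen c \<in> gens"
  using gen_in_gens[of "fst c"] displacement_inv[of "gen (fst c)"]
  by (auto simp: letter_value_def gens_def)

lemma gen_letter:
  assumes "g \<in> gens"
  shows "fst (gen_letter g) \<in> alphabet" "letter_value G gen (gen_letter g) = g"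
proof -
  have inj: "inj_on gen_enum alphabet" and g: "g \<in> gen_enum ` alphabet"
    using gen_enum_bij assms by (auto simp: bij_betw_def)
  then have "the_inv_into alphabet gen_enum g \<in> alphabet"
    by (rule the_inv_into_into) simp
  then show "fst (gen_letter g) \<in> alphabet" "letter_value G gen (gen_letter g) = g"
    using f_the_inv_into_f[OF inj g] unfolding gen_letter_def letter_value_def gen_def by simp_all
qed

lemma displacement_eval_word:
  "word_over alphabet u \<Longrightarrow> displacement (eval_word G gen u) \<le> step_radius * length u"
proof (induction u)
  case (Cons c u)
  have "displacement (letter_value G gen c) \<le> step_radius"
    using letter_value_in_gens[of c] Cons.prems by (simp add: gens_def)
  moreover have "displacement (eval_word G gen (c # u))
      \<le> displacement (letter_value G gen c) + displacement (eval_word G gen u)"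
    by (simp add: displacement_mult)
  moreover have "step_radius * real (length (c # u)) = step_radius + step_radius * real (length u)"
    by (simp add: distrib_left)
  ultimately show ?case using Cons by simp
qed (simp add: displacement_def)

end

context cat0_action_net
begin

text \<open>The combing of \<open>h\<close> follows the geodesic from \<open>x0\<close> to \<open>h x0\<close>: its \<open>j\<close>-th vertex
  is an orbit point within \<open>r\<close> of the point at arc length \<open>j\<close>, so consecutive vertices differ
  by a generator. Steps between equal vertices are empty, which makes the prefixes stabilise
  once the end of the geodesic is reached.\<close>

definition geodesic_to :: "'g \<Rightarrow> real \<Rightarrow> 'x" where
  "geodesic_to h = (SOME \<gamma>. geodesic_segment \<gamma> x0 (\<phi> h x0))"

definition comb_point :: "'g \<Rightarrow> nat \<Rightarrow> 'x" where
  "comb_point h j = geodesic_to h (min (real j) (displacement h))"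

definition comb_vertex :: "'g \<Rightarrow> nat \<Rightarrow> 'g" where
  "comb_vertex h j = (if j = 0 then \<one> else if displacement h \<le> real j then h
     else (SOME g. g \<in> carrier G \<and> dist (comb_point h j) (\<phi> g x0) \<le> r))"

definition comb_step :: "'g \<Rightarrow> nat \<Rightarrow> nat word" where
  "comb_step h j = (if comb_vertex h j = comb_vertex h (Suc j) then []
     else [gen_letter (inv (comb_vertex h j) \<otimes> comb_vertex h (Suc j))])"

definition comb_prefix :: "'g \<Rightarrow> nat \<Rightarrow> nat word" where
  "comb_prefix h k = concat (map (comb_step h) [0..<k])"

definition comb_size :: "'g \<Rightarrow> nat" where
  "comb_size h = nat \<lceil>displacement h\<rceil> + 1"

definition comb_word :: "'g \<Rightarrow> nat word" where
  "comb_word h = comb_prefix h (comb_size h)"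

lemma geodesic_to: "geodesic_segment (geodesic_to h) x0 (\<phi> h x0)"
proof -
  have "\<exists>\<gamma>. geodesic_segment \<gamma> x0 (\<phi> h x0)"
    using CAT0_space by (simp add: CAT0_space_def geodesic_space_def)
  then show ?thesis unfolding geodesic_to_def by (rule someI_ex)
qed

lemma comb_point_0: "comb_point h 0 = x0"
  using geodesic_segment_start[OF geodesic_to] displacement_nonneg[of h] by (simp add: comb_point_def)

lemma comb_point_end: "displacement h \<le> real j \<Longrightarrow> comb_point h j = \<phi> h x0"
  using geodesic_segment_end[OF geodesic_to] by (simp add: comb_point_def displacement_def)

lemma comb_point_step: "dist (comb_point h j) (comb_point h (Suc j)) \<le> 1"
proof -
  have "min (real j) (displacement h) \<in> {0..dist x0 (\<phi> h x0)}"
    "min (real (Suc j)) (displacement h) \<in> {0..dist x0 (\<phi> h x0)}"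
    using displacement_nonneg[of h] by (auto simp: displacement_def)
  then have "dist (comb_point h j) (comb_point h (Suc j))
      = \<bar>min (real j) (displacement h) - min (real (Suc j)) (displacement h)\<bar>"
    unfolding comb_point_def by (rule geodesic_segment_dist[OF geodesic_to])
  also have "\<dots> \<le> 1" by (simp add: min_def)
  finally show ?thesis .
qed

lemma comb_vertex_closed_near:
  assumes h: "h \<in> carrier G"
  shows "comb_vertex h j \<in> carrier G \<and> dist (comb_point h j) (\<phi> (comb_vertex h j) x0) \<le> r"
proof (cases "j = 0 \<or> displacement h \<le> real j")
  case True
  then show ?thesis
    using h net_radius_nonneg by (auto simp: comb_vertex_def comb_point_0 comb_point_end)
next
  case False
  define g where "g = (SOME g. g \<in> carrier G \<and> dist (comb_point h j) (\<phi> g x0) \<le> r)"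
  have "g \<in> carrier G \<and> dist (comb_point h j) (\<phi> g x0) \<le> r"
    unfolding g_def by (rule someI_ex) (use orbit_net in blast)
  moreover have "comb_vertex h j = g" using False by (simp add: comb_vertex_def g_def)
  ultimately show ?thesis by simp
qed

lemma comb_vertex_closed [simp]: "h \<in> carrier G \<Longrightarrow> comb_vertex h j \<in> carrier G"
  using comb_vertex_closed_near by blast

lemma comb_vertex_near: "h \<in> carrier G \<Longrightarrow> dist (comb_point h j) (\<phi> (comb_vertex h j) x0) \<le> r"
  using comb_vertex_closed_near by blast

lemma comb_vertex_0: "comb_vertex h 0 = \<one>"
  by (simp add: comb_vertex_def)

lemma comb_vertex_end:
  assumes "comb_size h \<le> j"
  shows "comb_vertex h j = h"
proof -
  have "displacement h \<le> real (nat \<lceil>displacement h\<rceil>)" by linarith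
  then show ?thesis using assms by (simp add: comb_vertex_def comb_size_def)
qed

lemma comb_vertex_step_in_gens:
  assumes h: "h \<in> carrier G"
  shows "inv (comb_vertex h j) \<otimes> comb_vertex h (Suc j) \<in> gens"
proof -
  have "dist (\<phi> (comb_vertex h j) x0) (\<phi> (comb_vertex h (Suc j)) x0) \<le> r + 1 + r"
    using comb_vertex_near[OF h, of j] comb_vertex_near[OF h, of "Suc j"] comb_point_step[of h j]
      dist_triangle[of "\<phi> (comb_vertex h j) x0" "\<phi> (comb_vertex h (Suc j)) x0" "comb_point h j"]
      dist_triangle[of "comb_point h j" "\<phi> (comb_vertex h (Suc j)) x0" "comb_point h (Suc j)"]
    by (simp add: dist_commute)
  then show ?thesis using h by (simp add: gens_def dist_orbit step_radius_def)
qed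

lemma eval_comb_step:
  "h \<in> carrier G \<Longrightarrow> eval_word G gen (comb_step h j) = inv (comb_vertex h j) \<otimes> comb_vertex h (Suc j)"
  using gen_letter(2)[OF comb_vertex_step_in_gens] by (auto simp: comb_step_def)

lemma word_over_comb_step: "h \<in> carrier G \<Longrightarrow> word_over alphabet (comb_step h j)"
  using gen_letter(1)[OF comb_vertex_step_in_gens] by (simp add: comb_step_def)

lemma length_comb_step: "length (comb_step h j) \<le> 1"
  by (simp add: comb_step_def)

lemma comb_prefix_Suc: "comb_prefix h (Suc k) = comb_prefix h k @ comb_step h k"
  by (simp add: comb_prefix_def)

lemma eval_comb_prefix: "h \<in> carrier G \<Longrightarrow> eval_word G gen (comb_prefix h k) = comb_vertex h k"
  by (induction k) (simp_all add: comb_prefix_def comb_vertex_0 eval_word_append eval_comb_step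
      m_assoc[symmetric])

lemma word_over_comb_prefix: "h \<in> carrier G \<Longrightarrow> word_over alphabet (comb_prefix h k)"
  by (simp add: comb_prefix_def word_over_comb_step)

lemma comb_prefix_stable: "comb_size h \<le> k \<Longrightarrow> comb_prefix h k = comb_word h"
proof (induction k)
  case (Suc k)
  show ?case
  proof (cases "comb_size h = Suc k")
    case False
    then have "comb_size h \<le> k" using Suc.prems by simp
    then have "comb_step h k = []" using comb_vertex_end[of h] by (simp add: comb_step_def)
    then show ?thesis using Suc.IH \<open>comb_size h \<le> k\<close> by (simp add: comb_prefix_Suc)
  qed (simp add: comb_word_def)
qed (simp add: comb_word_def)

lemma eval_comb_word [simp]: "h \<in> carrier G \<Longrightarrow> eval_word G gen (comb_word h) = h"
  by (simp add: comb_word_def eval_comb_prefix comb_vertex_end)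

lemma word_over_comb_word: "h \<in> carrier G \<Longrightarrow> word_over alphabet (comb_word h)"
  by (simp add: comb_word_def word_over_comb_prefix)

lemma length_comb_word: "length (comb_word h) \<le> comb_size h"
proof -
  have "length (comb_prefix h k) \<le> k" for k
  proof (induction k)
    case (Suc k)
    then show ?case using length_comb_step[of h k] by (simp add: comb_prefix_Suc)
  qed (simp add: comb_prefix_def)
  then show ?thesis by (simp add: comb_word_def)
qed

lemma comb_word_one [simp]: "comb_word \<one> = []"
proof -
  have "displacement \<one> = 0" by (simp add: displacement_def)
  then have "comb_step \<one> j = []" for j by (simp add: comb_step_def comb_vertex_def)
  then show ?thesis by (simp add: comb_word_def comb_prefix_def)
qed

lemma comb_size_le: "real (comb_size h) \<le> displacement h + 2"
  unfolding comb_size_def using displacement_nonneg[of h] by linarith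

lemma comb_size_le_ceiling:
  assumes "displacement h \<le> R"
  shows "comb_size h \<le> nat \<lceil>R\<rceil> + 1"
proof -
  have "nat \<lceil>displacement h\<rceil> \<le> nat \<lceil>R\<rceil>" by (rule nat_mono[OF ceiling_mono[OF assms]])
  then show ?thesis unfolding comb_size_def by (rule add_right_mono)
qed

text \<open>This is where the CAT(0) hypothesis enters.\<close>
lemma comb_vertices_fellow_travel:
  assumes h: "h \<in> carrier G" and h': "h' \<in> carrier G"
  shows "displacement (inv (comb_vertex h j) \<otimes> comb_vertex h' j) \<le> 2 * r + 2 * dist (\<phi> h x0) (\<phi> h' x0)"
proof -
  have "dist (comb_point h j) (comb_point h' j) \<le> 2 * dist (\<phi> h x0) (\<phi> h' x0)"
    using CAT0_space unfolding comb_point_def displacement_def CAT0_space_def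
    by (intro CAT0_geodesics_truncated geodesic_to) simp_all
  then have "dist (\<phi> (comb_vertex h j) x0) (\<phi> (comb_vertex h' j) x0) \<le> r + 2 * dist (\<phi> h x0) (\<phi> h' x0) + r"
    using comb_vertex_near[OF h, of j] comb_vertex_near[OF h', of j]
      dist_triangle[of "\<phi> (comb_vertex h j) x0" "\<phi> (comb_vertex h' j) x0" "comb_point h j"]
      dist_triangle[of "comb_point h j" "\<phi> (comb_vertex h' j) x0" "comb_point h' j"]
    by (simp add: dist_commute)
  then show ?thesis using h h' by (simp add: dist_orbit)
qed

end

section \<open>Filling loops\<close>

context cat0_action_net
begin

definition rung_bound :: nat where
  "rung_bound = nat \<lceil>2 * r + 2 * step_radius\<rceil> + 1"

definition relator_bound :: nat where
  "relator_bound = 2 * rung_bound + nat \<lceil>step_radius\<rceil> + 2"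

definition relators :: "nat word set" where
  "relators = {w. word_over alphabet w \<and> length w \<le> relator_bound \<and> eval_word G gen w = \<one>}"

definition rung :: "'g \<Rightarrow> 'g \<Rightarrow> nat \<Rightarrow> nat word" where
  "rung h h' j = comb_word (inv (comb_vertex h j) \<otimes> comb_vertex h' j)"

lemma finite_relators: "finite relators"
proof (rule finite_subset)
  show "relators \<subseteq> {w. set w \<subseteq> alphabet \<times> UNIV \<and> length w \<le> relator_bound}"
    by (force simp: relators_def word_over_def)
  show "finite {w. set w \<subseteq> alphabet \<times> (UNIV :: bool set) \<and> length w \<le> relator_bound}"
    using finite_alphabet by (intro finite_lists_length_le) simp
qed

lemma rung_0: "rung h h' 0 = []"
  by (simp add: rung_def comb_vertex_0)

lemma length_rung:
  assumes "h \<in> carrier G" "h' \<in> carrier G" "dist (\<phi> h x0) (\<phi> h' x0) \<le> step_radius"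
  shows "length (rung h h' j) \<le> rung_bound"
proof -
  have "displacement (inv (comb_vertex h j) \<otimes> comb_vertex h' j) \<le> 2 * r + 2 * step_radius"
    using comb_vertices_fellow_travel[OF assms(1,2), of j] assms(3) by linarith
  then show ?thesis
    using comb_size_le_ceiling length_comb_word order_trans unfolding rung_def rung_bound_def by blast
qed

lemma ladder_cell_relator:
  assumes h: "h \<in> carrier G" and h': "h' \<in> carrier G"
    and d: "dist (\<phi> h x0) (\<phi> h' x0) \<le> step_radius"
  shows "comb_step h j @ rung h h' (Suc j) @ inv_word (comb_step h' j) @ inv_word (rung h h' j) \<in> relators"
proof -
  let ?a = "comb_vertex h j" and ?b = "comb_vertex h (Suc j)"
    and ?a' = "comb_vertex h' j" and ?b' = "comb_vertex h' (Suc j)"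
  have "eval_word G gen (comb_step h j @ rung h h' (Suc j) @ inv_word (comb_step h' j) @ inv_word (rung h h' j))
      = (inv ?a \<otimes> ?b) \<otimes> ((inv ?b \<otimes> ?b') \<otimes> (inv (inv ?a' \<otimes> ?b') \<otimes> inv (inv ?a \<otimes> ?a')))"
    using h h' by (simp add: eval_word_append eval_word_inv_word eval_comb_step rung_def)
  also have "\<dots> = \<one>"
    using h h' by (simp add: inv_mult_group m_assoc mult_inv_cancel_left inv_mult_cancel_left)
  finally show ?thesis
    using length_comb_step[of h j] length_comb_step[of h' j] length_rung[OF h h' d, of j]
      length_rung[OF h h' d, of "Suc j"] word_over_comb_step[OF h] word_over_comb_step[OF h'] h h'
    by (simp add: relators_def relator_bound_def rung_def word_over_comb_word)
qed

lemma letter_relator: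
  assumes c: "fst c \<in> alphabet"
  shows "[c] @ inv_word (comb_word (letter_value G gen c)) \<in> relators"
proof -
  have "letter_value G gen c \<in> gens" by (rule letter_value_in_gens[OF c])
  then have "comb_size (letter_value G gen c) \<le> nat \<lceil>step_radius\<rceil> + 1"
    by (intro comb_size_le_ceiling) (simp add: gens_def)
  then show ?thesis
    using c length_comb_word[of "letter_value G gen c"]
    by (simp add: relators_def relator_bound_def word_over_comb_word eval_word_inv_word)
qed

text \<open>The van Kampen diagram of a triangle with sides the combings of \<open>h\<close> and \<open>h c\<close> and the
  letter \<open>c\<close>: a ladder of cells between the two combings, closed off by one relator.\<close>
lemma triangle_conj_decomp:
  assumes h: "h \<in> carrier G" and c: "fst c \<in> alphabet"
  defines "h' \<equiv> h \<otimes> letter_value G gen c"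
  shows "\<exists>cs. is_conj_decomp alphabet relators (comb_word h @ [c] @ inv_word (comb_word h')) cs
    \<and> length cs = max (comb_size h) (comb_size h') + 1"
proof -
  define e where "e = letter_value G gen c"
  have e: "e \<in> gens" unfolding e_def by (rule letter_value_in_gens[OF c])
  then have e_closed: "e \<in> carrier G" by (simp add: gens_def)
  have h': "h' \<in> carrier G" using h by (simp add: h'_def)
  have d: "dist (\<phi> h x0) (\<phi> h' x0) \<le> step_radius"
    using h e e_closed by (simp add: h'_def e_def[symmetric] dist_orbit gens_def inv_mult_cancel_left)
  define M where "M = max (comb_size h) (comb_size h')"
  have "\<exists>cs. is_conj_decomp alphabet relators
      (comb_prefix h M @ rung h h' M @ inv_word (comb_prefix h' M)) cs \<and> length cs = M"
    unfolding comb_prefix_def using ladder_cell_relator[OF h h' d] word_over_comb_step[OF h]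
    by (intro conj_decomp_ladder) (simp_all add: rung_0)
  moreover have "comb_prefix h M = comb_word h" "comb_prefix h' M = comb_word h'"
    by (simp_all add: M_def comb_prefix_stable)
  moreover have "rung h h' M = comb_word e"
    using h e_closed by (simp add: rung_def M_def comb_vertex_end h'_def e_def inv_mult_cancel_left)
  ultimately obtain cs where cs: "is_conj_decomp alphabet relators (comb_word h @ comb_word e @ inv_word (comb_word h')) cs"
    "length cs = M"
    by auto
  define R0 where "R0 = [c] @ inv_word (comb_word e)"
  have "R0 \<in> relators" unfolding R0_def e_def by (rule letter_relator[OF c])
  then have decomp: "is_conj_decomp alphabet relators
      ((comb_word h @ R0 @ inv_word (comb_word h)) @ comb_word h @ comb_word e @ inv_word (comb_word h'))
      ((comb_word h, R0, False) # cs)"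
    using conj_decomp_append[OF conj_decomp_conjugate cs(1)] word_over_comb_word[OF h] by simp
  have "free_eq (comb_word h @ [c] @ inv_word (comb_word h'))
      ((comb_word h @ [c]) @ inv_word (comb_word e) @ comb_word e @ inv_word (comb_word h'))"
    using free_eq_sym[OF free_eq_cancel_inner[of "comb_word h @ [c]" "comb_word e" "inv_word (comb_word h')"]]
    by simp
  also have "free_eq \<dots> ((comb_word h @ R0 @ inv_word (comb_word h)) @ comb_word h @ comb_word e @ inv_word (comb_word h'))"
    using free_eq_sym[OF free_eq_cancel_inner[of "comb_word h @ R0" "comb_word h" "comb_word e @ inv_word (comb_word h')"]]
    by (simp add: R0_def)
  finally have "is_conj_decomp alphabet relators (comb_word h @ [c] @ inv_word (comb_word h'))
      ((comb_word h, R0, False) # cs)"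
    using decomp by (rule conj_decomp_free_eq)
  then show ?thesis using cs(2) by (intro exI[of _ "(comb_word h, R0, False) # cs"]) (simp add: M_def)
qed

lemma displacement_le_word_length:
  assumes "g \<in> carrier G"
  shows "displacement g \<le> step_radius * word_length G alphabet gen g"
proof -
  obtain u where u: "word_over alphabet u"
    "length u = word_length G alphabet gen (eval_word G gen (comb_word g))"
    "eval_word G gen u = eval_word G gen (comb_word g)"
    by (rule word_length_attained[OF word_over_comb_word[OF assms]])
  then show ?thesis using displacement_eval_word[OF u(1)] assms by simp
qed

lemma triangle_size_le:
  assumes a: "a \<in> carrier G" and c: "fst c \<in> alphabet"
  defines "b \<equiv> a \<otimes> letter_value G gen c"
  shows "real (max (comb_size a) (comb_size b) + 1) \<le> (step_radius + 3) * (real (word_length G alphabet gen b) + 1)"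
proof -
  have b: "b \<in> carrier G" using a by (simp add: b_def)
  have "dist (\<phi> a x0) (\<phi> b x0) \<le> step_radius"
    using a letter_value_in_gens[OF c] by (simp add: b_def dist_orbit gens_def inv_mult_cancel_left)
  then have "displacement a \<le> displacement b + step_radius"
    using dist_triangle[of x0 "\<phi> a x0" "\<phi> b x0"] by (simp add: displacement_def dist_commute)
  moreover have "displacement b \<le> step_radius * word_length G alphabet gen b"
    by (rule displacement_le_word_length[OF b])
  ultimately have "real (max (comb_size a) (comb_size b) + 1)
      \<le> step_radius * word_length G alphabet gen b + step_radius + 3"
    using comb_size_le[of a] comb_size_le[of b] step_radius_ge_1 by (simp add: max_def)
  also have "\<dots> \<le> (step_radius + 3) * (real (word_length G alphabet gen b) + 1)"
    by (simp add: algebra_simps)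
  finally show ?thesis .
qed

text \<open>Fill the loop \<open>w\<close> by the triangles spanned by the combings of consecutive prefixes of \<open>w\<close>.\<close>
lemma conj_decomp_radial:
  assumes w: "word_over alphabet w" and e: "eval_word G gen w = \<one>"
  shows "\<exists>cs. is_conj_decomp alphabet relators w cs \<and> length cs = (\<Sum>i<length w.
    max (comb_size (eval_word G gen (take i w))) (comb_size (eval_word G gen (take (Suc i) w))) + 1)"
proof (rule conj_decomp_telescope)
  show "comb_word (eval_word G gen (take 0 w)) = []" "comb_word (eval_word G gen (take (length w) w)) = []"
    using e by simp_all
  fix i assume i: "i < length w"
  then have "fst (w ! i) \<in> alphabet" using w by (auto simp: word_over_def)
  then show "\<exists>cs. is_conj_decomp alphabet relators (comb_word (eval_word G gen (take i w)) @ [w ! i]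
      @ inv_word (comb_word (eval_word G gen (take (Suc i) w)))) cs \<and> length cs =
      max (comb_size (eval_word G gen (take i w))) (comb_size (eval_word G gen (take (Suc i) w))) + 1"
    using triangle_conj_decomp[of "eval_word G gen (take i w)" "w ! i"] i
    by (simp add: eval_word_take_Suc)
qed

lemma Area_le_radial_sum:
  assumes w: "word_over alphabet w" and e: "eval_word G gen w = \<one>"
  shows "real (Area alphabet relators w)
    \<le> (step_radius + 3) * (\<Sum>i=1..length w. real (word_length G alphabet gen (eval_word G gen (take i w))) + 1)"
proof -
  define p where "p i = eval_word G gen (take i w)" for i
  define F where "F i = real (word_length G alphabet gen (p i)) + 1" for i
  obtain cs where cs: "is_conj_decomp alphabet relators w cs"
    "length cs = (\<Sum>i<length w. max (comb_size (p i)) (comb_size (p (Suc i))) + 1)"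
    using conj_decomp_radial[OF w e] unfolding p_def by blast
  have "Area alphabet relators w \<le> (\<Sum>i<length w. max (comb_size (p i)) (comb_size (p (Suc i))) + 1)"
    using Area_le[OF cs(1)] cs(2) by simp
  then have "real (Area alphabet relators w)
      \<le> real (\<Sum>i<length w. max (comb_size (p i)) (comb_size (p (Suc i))) + 1)"
    by (rule of_nat_mono)
  also have "\<dots> = (\<Sum>i<length w. real (max (comb_size (p i)) (comb_size (p (Suc i))) + 1))"
    by (rule of_nat_sum)
  also have "\<dots> \<le> (\<Sum>i<length w. (step_radius + 3) * F (Suc i))"
  proof (rule sum_mono)
    fix i assume "i \<in> {..<length w}"
    then have "i < length w" "fst (w ! i) \<in> alphabet" using w by (auto simp: word_over_def)
    then show "real (max (comb_size (p i)) (comb_size (p (Suc i))) + 1) \<le> (step_radius + 3) * F (Suc i)"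
      using triangle_size_le[of "p i" "w ! i"] by (simp add: p_def F_def eval_word_take_Suc)
  qed
  also have "\<dots> = (step_radius + 3) * (\<Sum>i=1..length w. F i)"
    by (simp add: sum_distrib_left sum.atLeast1_atMost_eq)
  finally show ?thesis by (simp add: F_def p_def)
qed

lemma finite_presentation: "finite_presentation G alphabet gen relators"
  unfolding finite_presentation_def
proof (intro conjI ballI allI impI iffI)
  show "finite alphabet" "finite relators" by (rule finite_alphabet, rule finite_relators)
  show "gen ` alphabet \<subseteq> carrier G" using range_gen by auto
  show "word_over alphabet r" if "r \<in> relators" for r using that by (simp add: relators_def)
  show "\<exists>w. word_over alphabet w \<and> eval_word G gen w = g" if "g \<in> carrier G" for g
    using that word_over_comb_word eval_comb_word by blast
  show "\<exists>cs. is_conj_decomp alphabet relators w cs"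
    if "word_over alphabet w" "eval_word G gen w = \<one>" for w
    using conj_decomp_radial[OF that] by blast
  show "eval_word G gen w = \<one>" if decomposable: "\<exists>cs. is_conj_decomp alphabet relators w cs" for w
  proof -
    obtain cs where "is_conj_decomp alphabet relators w cs" using decomposable by blast
    moreover have "\<forall>r\<in>relators. eval_word G gen r = \<one>" by (simp add: relators_def)
    ultimately show ?thesis by (intro eval_word_conj_decomp[OF range_gen])
  qed
qed

end

theorem theorem4p2:
  fixes G :: "('g, 'b) monoid_scheme" and \<phi> :: "'g \<Rightarrow> 'x::metric_space \<Rightarrow> 'x"
  assumes "group G" and "cat0_group_action G \<phi>"
  shows "\<exists>(A::nat set) \<iota> R (C::real). finite_presentation G A \<iota> R \<and> C > 0 \<and>
    (\<forall>w. word_over A w \<and> eval_word G \<iota> w = \<one>\<^bsub>G\<^esub> \<longrightarrow>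
       real (Area A R w) \<le> C * (\<Sum>i=1..length w. real (word_length G A \<iota> (eval_word G \<iota> (take i w))) + 1))"
proof -
  interpret cat0_action G \<phi>
    using assms by (intro cat0_action.intro cat0_action_axioms.intro)
  obtain x0 :: 'x where True by simp
  obtain r where r: "0 \<le> r" "\<forall>y. \<exists>g\<in>carrier G. dist y (\<phi> g x0) \<le> r"
    by (rule orbit_cobounded)
  interpret cat0_action_net G \<phi> x0 r
    by unfold_locales (use r in auto)
  show ?thesis
    using finite_presentation Area_le_radial_sum step_radius_ge_1
    by (intro exI[of _ alphabet] exI[of _ gen] exI[of _ relators] exI[of _ "step_radius + 3"]) auto
qed

end
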